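(* For all integers $r, k \geq 1$, we have $s_r(K_{k+1}) \geq P_r(k)$.
   Context: All graphs are finite and simple. For graphs $G,H$ and an integer $r\ge 1$, write $G \rightarrow (H)_r$ if every colouring of the edges of $G$ with $r$ colours contains a monochromatic copy of $H$. A graph $G$ is $r$-Ramsey-minimal for $H$ if $G \rightarrow (H)_r$ but no proper subgraph $G'\subsetneq G$ satisfies $G' \rightarrow (H)_r$. Define $s_r(H) := \min \delta(G)$ over all graphs $G$ that are $r$-Ramsey-minimal for $H$, where $\delta$ denotes minimum degree. A colour pattern on a vertex set $V$ is a sequence $G_1,\dots,G_r$ of pairwise edge-disjoint graphs all having vertex set $V$; it is $H$-free if no $G_i$ contains $H$ as a subgraph. Given a colour pattern $G_1,\dots,G_r$ on $V$ and a colouring $c: V \to [r]$, a strongly monochromatic $K_k$ is a set of $k$ vertices all receiving the same colour $i$ under $c$ and forming a clique in $G_i$. $P_r(k)$ is the smallest integer $n$ such that there exists a $K_{k+1}$-free colour pattern $G_1,\dots,G_r$ on an $n$-element vertex set $V$ such that every colouring $V \to [r]$ yields a strongly monochromatic $K_k$. *)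

theory Defs
  imports Main "HOL-Library.Extended_Nat"
begin

type_synonym 'a graph = "'a set \<times> 'a set set"

definition verts :: "'a graph \<Rightarrow> 'a set" where "verts G = fst G"
definition edges :: "'a graph \<Rightarrow> 'a set set" where "edges G = snd G"

definition is_graph :: "'a graph \<Rightarrow> bool" where
  "is_graph G \<longleftrightarrow> finite (verts G) \<and> (\<forall>e\<in>edges G. card e = 2 \<and> e \<subseteq> verts G)"

definition subgraph :: "'a graph \<Rightarrow> 'a graph \<Rightarrow> bool" where
  "subgraph H G \<longleftrightarrow> is_graph H \<and> verts H \<subseteq> verts G \<and> edges H \<subseteq> edges G"

definition complete :: "nat \<Rightarrow> nat graph" where
  "complete n = ({0..<n}, {e. e \<subseteq> {0..<n} \<and> card e = 2})"

definition embeds :: "('b \<Rightarrow> 'a) \<Rightarrow> 'b graph \<Rightarrow> 'a graph \<Rightarrow> bool" where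
  "embeds f H G \<longleftrightarrow> inj_on f (verts H) \<and> f ` verts H \<subseteq> verts G \<and>
      (\<forall>e\<in>edges H. f ` e \<in> edges G)"

definition contains_copy :: "'b graph \<Rightarrow> 'a graph \<Rightarrow> bool" where
  "contains_copy H G \<longleftrightarrow> (\<exists>f. embeds f H G)"

definition arrows :: "'a graph \<Rightarrow> 'b graph \<Rightarrow> nat \<Rightarrow> bool" where
  "arrows G H r \<longleftrightarrow>
     (\<forall>c :: 'a set \<Rightarrow> nat. (\<forall>e\<in>edges G. c e < r) \<longrightarrow>
        (\<exists>i<r. \<exists>f. embeds f H G \<and> (\<forall>e\<in>edges H. c (f ` e) = i)))"

definition ramsey_minimal :: "nat \<Rightarrow> 'b graph \<Rightarrow> 'a graph \<Rightarrow> bool" where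
  "ramsey_minimal r H G \<longleftrightarrow> is_graph G \<and> arrows G H r \<and>
     (\<forall>G'. subgraph G' G \<and> G' \<noteq> G \<longrightarrow> \<not> arrows G' H r)"

definition degree :: "'a graph \<Rightarrow> 'a \<Rightarrow> nat" where
  "degree G v = card {e \<in> edges G. v \<in> e}"

definition min_degree :: "'a graph \<Rightarrow> nat" where
  "min_degree G = Min (degree G ` verts G)"

text \<open>Every finite graph is isomorphic to one on vertex type nat, so we range over those.
Minimum of the empty set is \<infinity>.\<close>
definition s_r :: "nat \<Rightarrow> 'b graph \<Rightarrow> enat" where
  "s_r r H = (INF G \<in> {G :: nat graph. ramsey_minimal r H G}. enat (min_degree G))"

definition colour_pattern :: "nat \<Rightarrow> 'a set \<Rightarrow> (nat \<Rightarrow> 'a set set) \<Rightarrow> bool" where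
  "colour_pattern r V Gs \<longleftrightarrow>
     (\<forall>i<r. is_graph (V, Gs i)) \<and> (\<forall>i<r. \<forall>j<r. i \<noteq> j \<longrightarrow> Gs i \<inter> Gs j = {})"

definition pattern_free :: "nat \<Rightarrow> 'a set \<Rightarrow> (nat \<Rightarrow> 'a set set) \<Rightarrow> 'b graph \<Rightarrow> bool" where
  "pattern_free r V Gs H \<longleftrightarrow> (\<forall>i<r. \<not> contains_copy H (V, Gs i))"

definition strongly_mono_clique ::
  "nat \<Rightarrow> 'a set \<Rightarrow> (nat \<Rightarrow> 'a set set) \<Rightarrow> ('a \<Rightarrow> nat) \<Rightarrow> nat \<Rightarrow> bool" where
  "strongly_mono_clique r V Gs c k \<longleftrightarrow>
     (\<exists>i<r. \<exists>S. S \<subseteq> V \<and> card S = k \<and> (\<forall>v\<in>S. c v = i) \<and>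
        (\<forall>e. e \<subseteq> S \<and> card e = 2 \<longrightarrow> e \<in> Gs i))"

text \<open>P_r(k) (infimum over achievable n, \<infinity> if none).\<close>
definition P_r :: "nat \<Rightarrow> nat \<Rightarrow> enat" where
  "P_r r k = (INF n \<in> {n. \<exists>(V :: nat set) Gs. finite V \<and> card V = n \<and>
        colour_pattern r V Gs \<and> pattern_free r V Gs (complete (k + 1)) \<and>
        (\<forall>c. (\<forall>v\<in>V. c v < r) \<longrightarrow> strongly_mono_clique r V Gs c k)}. enat n)"

end

theory Submission
  imports Defs
begin

text \<open>Let \<open>G\<close> be Ramsey-minimal for \<open>K\<^sub>k\<^sub>+\<^sub>1\<close> and \<open>v\<close> a vertex of minimum degree.
By minimality \<open>G - v\<close> has an \<open>r\<close>-colouring \<open>c\<close> without a monochromatic \<open>K\<^sub>k\<^sub>+\<^sub>1\<close>.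
Restricting \<open>c\<close> to the edges inside the neighbourhood \<open>N\<close> of \<open>v\<close> gives a \<open>K\<^sub>k\<^sub>+\<^sub>1\<close>-free
colour pattern on \<open>N\<close>. A colouring of the vertices of \<open>N\<close> is the same as a colouring of
the edges at \<open>v\<close>; together with \<open>c\<close> it colours \<open>G\<close>, so it yields a monochromatic
\<open>K\<^sub>k\<^sub>+\<^sub>1\<close>, which must pass through \<open>v\<close>. Its other \<open>k\<close> vertices form a strongly
monochromatic \<open>K\<^sub>k\<close> in \<open>N\<close>. Hence \<open>P\<^sub>r(k) \<le> |N| = \<delta>(G)\<close>.\<close>

lemma verts_pair [simp]: "verts (V, E) = V"
  by (simp add: verts_def)

lemma edges_pair [simp]: "edges (V, E) = E"
  by (simp add: edges_def)

lemma is_graph_complete: "is_graph (complete n)"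
  by (auto simp: is_graph_def complete_def)

lemma card_2_obtain_other:
  assumes "card e = 2" "v \<in> e"
  obtains u where "u \<noteq> v" "e = {v, u}"
  using assms by (metis card_2_iff doubleton_eq_iff insertE singletonD)

lemma image_two_subset:
  assumes "inj_on f A" "e \<subseteq> f ` A" "card e = 2"
  obtains P where "P \<subseteq> A" "card P = 2" "f ` P = e"
proof
  let ?P = "A \<inter> f -` e"
  show "?P \<subseteq> A" by blast
  show image: "f ` ?P = e" using assms(2) by blast
  show "card ?P = 2"
    using card_image[OF inj_on_subset[OF assms(1)], of ?P] image assms(3) by auto
qed

definition mono_copy :: "nat \<Rightarrow> 'b graph \<Rightarrow> 'a graph \<Rightarrow> ('a set \<Rightarrow> nat) \<Rightarrow> bool" where
  "mono_copy r H G c \<longleftrightarrow> (\<exists>i<r. \<exists>f. embeds f H G \<and> (\<forall>e\<in>edges H. c (f ` e) = i))"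

lemma arrows_mono_copy:
  "arrows G H r \<longleftrightarrow> (\<forall>c. (\<forall>e\<in>edges G. c e < r) \<longrightarrow> mono_copy r H G c)"
  by (simp add: arrows_def mono_copy_def)

lemma arrows_verts_nonempty:
  assumes "arrows G H r" "r \<ge> 1" "verts H \<noteq> {}"
  shows "verts G \<noteq> {}"
proof -
  have "mono_copy r H G (\<lambda>_. 0)"
    using assms(1,2) by (simp add: arrows_mono_copy)
  then obtain f where "f ` verts H \<subseteq> verts G"
    by (auto simp: mono_copy_def embeds_def)
  then show ?thesis using assms(3) by blast
qed

definition neighbours :: "'a graph \<Rightarrow> 'a \<Rightarrow> 'a set" where
  "neighbours G v = {u. {v, u} \<in> edges G}"

definition delete_vertex :: "'a graph \<Rightarrow> 'a \<Rightarrow> 'a graph" where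
  "delete_vertex G v = (verts G - {v}, {e \<in> edges G. v \<notin> e})"

lemma neighbours_subset_verts:
  assumes "is_graph G"
  shows "neighbours G v \<subseteq> verts G - {v}"
proof
  fix u assume "u \<in> neighbours G v"
  then have "{v, u} \<in> edges G" by (simp add: neighbours_def)
  with assms show "u \<in> verts G - {v}"
    by (cases "u = v") (auto simp: is_graph_def)
qed

lemma card_neighbours:
  assumes "is_graph G"
  shows "card (neighbours G v) = degree G v"
proof -
  have "v \<notin> neighbours G v" using neighbours_subset_verts[OF assms] by blast
  then have "bij_betw (\<lambda>u. {v, u}) (neighbours G v) {e \<in> edges G. v \<in> e}"
  proof (intro bij_betwI')
    fix e assume e: "e \<in> {e \<in> edges G. v \<in> e}"
    with assms have "card e = 2" "v \<in> e" by (auto simp: is_graph_def)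
    then obtain u where "u \<noteq> v" "e = {v, u}" using card_2_obtain_other by metis
    with e show "\<exists>u\<in>neighbours G v. e = {v, u}" by (auto simp: neighbours_def)
  qed (auto simp: neighbours_def doubleton_eq_iff)
  then show ?thesis by (simp add: degree_def bij_betw_same_card)
qed

lemma ramsey_minimal_delete_vertex:
  assumes "ramsey_minimal r H G" "v \<in> verts G"
  shows "\<not> arrows (delete_vertex G v) H r"
proof -
  have "subgraph (delete_vertex G v) G"
    using assms(1) by (auto simp: ramsey_minimal_def subgraph_def is_graph_def delete_vertex_def)
  moreover have "verts (delete_vertex G v) \<noteq> verts G"
    using assms(2) by (auto simp: delete_vertex_def)
  then have "delete_vertex G v \<noteq> G" by metis
  ultimately show ?thesis using assms(1) unfolding ramsey_minimal_def by blast
qed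

lemma embeds_delete_vertex:
  assumes "embeds f H G" "v \<notin> f ` verts H" "is_graph H"
  shows "embeds f H (delete_vertex G v)"
  using assms by (fastforce simp: embeds_def delete_vertex_def is_graph_def)

definition link_pattern :: "'a graph \<Rightarrow> 'a \<Rightarrow> ('a set \<Rightarrow> nat) \<Rightarrow> nat \<Rightarrow> 'a set set" where
  "link_pattern G v c i = {e \<in> edges G. e \<subseteq> neighbours G v \<and> c e = i}"

definition extend_colouring :: "'a \<Rightarrow> ('a \<Rightarrow> nat) \<Rightarrow> ('a set \<Rightarrow> nat) \<Rightarrow> 'a set \<Rightarrow> nat" where
  "extend_colouring v cv c e = (if v \<in> e then cv (the_elem (e - {v})) else c e)"

lemma extend_colouring_at:
  "u \<noteq> v \<Longrightarrow> extend_colouring v cv c {v, u} = cv u"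
  by (simp add: extend_colouring_def insert_Diff_if)

lemma extend_colouring_bounded:
  assumes "is_graph G"
    and "\<forall>e\<in>edges (delete_vertex G v). c e < r" and "\<forall>u\<in>neighbours G v. cv u < r"
  shows "\<forall>e\<in>edges G. extend_colouring v cv c e < r"
proof
  fix e assume e: "e \<in> edges G"
  show "extend_colouring v cv c e < r"
  proof (cases "v \<in> e")
    case True
    moreover have "card e = 2" using e assms(1) by (simp add: is_graph_def)
    ultimately obtain u where "u \<noteq> v" "e = {v, u}"
      using card_2_obtain_other by metis
    then show ?thesis
      using e assms(3) by (auto simp: extend_colouring_at neighbours_def)
  qed (use e assms(2) in \<open>simp add: extend_colouring_def delete_vertex_def\<close>)
qed

lemma link_colour_pattern:
  assumes "is_graph G"
  shows "colour_pattern r (neighbours G v) (link_pattern G v c)"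
  using assms finite_subset[OF neighbours_subset_verts[OF assms]]
  by (auto simp: colour_pattern_def is_graph_def link_pattern_def)

lemma link_pattern_free:
  assumes "is_graph G" "is_graph H" "\<not> mono_copy r H (delete_vertex G v) c"
  shows "pattern_free r (neighbours G v) (link_pattern G v c) H"
  unfolding pattern_free_def contains_copy_def
proof (intro allI impI notI)
  fix i assume "i < r" "\<exists>f. embeds f H (neighbours G v, link_pattern G v c i)"
  then obtain f where f: "embeds f H (neighbours G v, link_pattern G v c i)" by blast
  then have "embeds f H (delete_vertex G v)"
    using neighbours_subset_verts[OF assms(1)]
    by (fastforce simp: embeds_def link_pattern_def delete_vertex_def)
  moreover have "\<forall>e\<in>edges H. c (f ` e) = i"
    using f by (auto simp: embeds_def link_pattern_def)
  ultimately show False using assms(3) \<open>i < r\<close> by (auto simp: mono_copy_def)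
qed

lemma clique_through_vertex_strongly_mono:
  assumes "is_graph G" "i < r"
    and f: "embeds f (complete (Suc k)) G" and j: "j < Suc k" "f j = v"
    and mono: "\<forall>e\<in>edges (complete (Suc k)). extend_colouring v cv c (f ` e) = i"
  shows "strongly_mono_clique r (neighbours G v) (link_pattern G v c) cv k"
proof -
  let ?A = "{0..<Suc k} - {j}"
  define S where "S = f ` ?A"
  have inj_all: "inj_on f {0..<Suc k}" using f by (simp add: embeds_def complete_def)
  then have inj: "inj_on f ?A" by (rule inj_on_subset) blast
  have vS: "v \<notin> S"
  proof
    assume "v \<in> S"
    then obtain j' where "j' \<in> ?A" "f j' = f j" using j(2) unfolding S_def by force
    then show False using inj_all j(1) by (auto dest: inj_onD)
  qed
  have edge: "f ` P \<in> edges G" and colour: "extend_colouring v cv c (f ` P) = i"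
    if "P \<subseteq> {0..<Suc k}" "card P = 2" for P
    using that f mono by (auto simp: embeds_def complete_def)
  have in_link: "x \<in> neighbours G v \<and> cv x = i" if "x \<in> S" for x
  proof -
    obtain j' where j': "j' \<in> ?A" "x = f j'" using \<open>x \<in> S\<close> unfolding S_def by blast
    then have "x \<noteq> v" using vS \<open>x \<in> S\<close> by blast
    have "f ` {j, j'} = {v, x}" using j j' by auto
    moreover have "card {j, j'} = 2" "{j, j'} \<subseteq> {0..<Suc k}" using j j' by auto
    ultimately show ?thesis
      using edge[of "{j, j'}"] colour[of "{j, j'}"] \<open>x \<noteq> v\<close>
      by (simp add: neighbours_def extend_colouring_at)
  qed
  have clique: "e \<in> link_pattern G v c i" if e: "e \<subseteq> S" "card e = 2" for e
  proof -
    obtain P where P: "P \<subseteq> ?A" "card P = 2" "f ` P = e"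
      using e unfolding S_def by (rule image_two_subset[OF inj])
    then have "P \<subseteq> {0..<Suc k}" by blast
    then have "e \<in> edges G" "extend_colouring v cv c e = i"
      using edge[of P] colour[of P] P(2,3) by simp_all
    moreover have "v \<notin> e" using vS e by blast
    moreover have "e \<subseteq> neighbours G v" using in_link e(1) by blast
    ultimately show ?thesis by (simp add: link_pattern_def extend_colouring_def)
  qed
  have "card S = k" using inj j(1) by (simp add: S_def card_image)
  then show ?thesis
    unfolding strongly_mono_clique_def
    using assms(2) in_link clique by (intro exI[of _ i] conjI exI[of _ S]) auto
qed

lemma link_strongly_mono:
  assumes "is_graph G" and arr: "arrows G (complete (Suc k)) r"
    and c: "\<forall>e\<in>edges (delete_vertex G v). c e < r"
    and no_mono: "\<not> mono_copy r (complete (Suc k)) (delete_vertex G v) c"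
    and cv: "\<forall>u\<in>neighbours G v. cv u < r"
  shows "strongly_mono_clique r (neighbours G v) (link_pattern G v c) cv k"
proof -
  obtain i f where i: "i < r" and f: "embeds f (complete (Suc k)) G"
    and mono: "\<forall>e\<in>edges (complete (Suc k)). extend_colouring v cv c (f ` e) = i"
    using arr extend_colouring_bounded[OF assms(1) c cv]
    by (auto simp: arrows_mono_copy mono_copy_def)
  have "v \<in> f ` {0..<Suc k}"
  proof (rule ccontr)
    assume v: "v \<notin> f ` {0..<Suc k}"
    from f v is_graph_complete have "embeds f (complete (Suc k)) (delete_vertex G v)"
      by (intro embeds_delete_vertex) (auto simp: complete_def)
    moreover have "\<forall>e\<in>edges (complete (Suc k)). c (f ` e) = i"
    proof
      fix e assume e: "e \<in> edges (complete (Suc k))"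
      then have "v \<notin> f ` e" using v by (auto simp: complete_def)
      then show "c (f ` e) = i" using mono e by (auto simp: extend_colouring_def)
    qed
    ultimately show False using no_mono i by (auto simp: mono_copy_def)
  qed
  then obtain j where "j < Suc k" "f j = v" by auto
  then show ?thesis
    using clique_through_vertex_strongly_mono[OF assms(1) i f _ _ mono] by blast
qed

lemma P_r_le_card:
  assumes "finite V" "colour_pattern r V Gs" "pattern_free r V Gs (complete (k + 1))"
    and "\<forall>c. (\<forall>v\<in>V. c v < r) \<longrightarrow> strongly_mono_clique r V Gs c k"
  shows "P_r r k \<le> enat (card (V :: nat set))"
  unfolding P_r_def using assms by (intro INF_lower) blast

lemma P_r_le_min_degree:
  fixes G :: "nat graph"
  assumes "r \<ge> 1" and rm: "ramsey_minimal r (complete (Suc k)) G"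
  shows "P_r r k \<le> enat (min_degree G)"
proof -
  have G: "is_graph G" and arr: "arrows G (complete (Suc k)) r"
    using rm by (auto simp: ramsey_minimal_def)
  have "verts G \<noteq> {}"
    using arrows_verts_nonempty[OF arr assms(1)] by (simp add: complete_def)
  then have "min_degree G \<in> degree G ` verts G"
    using G by (simp add: min_degree_def is_graph_def)
  then obtain v where v: "v \<in> verts G" and deg: "degree G v = min_degree G" by auto
  obtain c where c: "\<forall>e\<in>edges (delete_vertex G v). c e < r"
    and no_mono: "\<not> mono_copy r (complete (Suc k)) (delete_vertex G v) c"
    using ramsey_minimal_delete_vertex[OF rm v] by (auto simp: arrows_mono_copy)
  have "P_r r k \<le> enat (card (neighbours G v))"
  proof (intro P_r_le_card)
    show "finite (neighbours G v)"
      using finite_subset[OF neighbours_subset_verts[OF G]] G by (simp add: is_graph_def)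
  qed (use link_colour_pattern[OF G] link_pattern_free[OF G is_graph_complete no_mono]
        link_strongly_mono[OF G arr c no_mono] in auto)
  then show ?thesis using card_neighbours[OF G] deg by simp
qed

theorem lemma2p1:
  fixes r k :: nat
  assumes "r \<ge> 1" and "k \<ge> 1"
  shows "s_r r (complete (k + 1)) \<ge> P_r r k"
  unfolding s_r_def using P_r_le_min_degree[OF assms(1)] by (auto intro: INF_greatest)

end
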